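(* Suppose the following statement (Conjecture 1) holds: every $D(4)$-triple $\{a,b,c\}$ has a unique extension to a $D(4)$-quadruple $\{a,b,c,d\}$ with $d>\max\{a,b,c\}$. Then the following statement (Conjecture 2) holds: if $\{a_1,b,c,d\}$ is a $D(4)$-quadruple with $a_1<b<c<d$, then $\{a_2,b,c,d\}$ is not a $D(4)$-quadruple for any positive integer $a_2$ with $a_2\neq a_1$ and $a_2<b$.
   Context: A $D(4)$-$m$-tuple is a set of $m$ distinct positive integers such that the product of any two distinct elements increased by $4$ is a perfect square ($m=3$: triple, $m=4$: quadruple). *)

theory Defs
  imports Main
begin

definition is_square :: "nat \<Rightarrow> bool" where
  "is_square n \<longleftrightarrow> (\<exists>k. n = k ^ 2)"

definition D4_tuple :: "nat \<Rightarrow> nat set \<Rightarrow> bool" where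
  "D4_tuple m S \<longleftrightarrow> finite S \<and> card S = m \<and> (\<forall>x\<in>S. 0 < x) \<and>
     (\<forall>x\<in>S. \<forall>y\<in>S. x \<noteq> y \<longrightarrow> is_square (x * y + 4))"

definition conjecture1 :: bool where
  "conjecture1 \<longleftrightarrow> (\<forall>a b c. D4_tuple 3 {a, b, c} \<longrightarrow>
     (\<exists>!d. D4_tuple 4 {a, b, c, d} \<and> d > Max {a, b, c}))"

definition conjecture2 :: bool where
  "conjecture2 \<longleftrightarrow> (\<forall>a1 b c d. D4_tuple 4 {a1, b, c, d} \<and> a1 < b \<and> b < c \<and> c < d \<longrightarrow>
     (\<forall>a2. 0 < a2 \<and> a2 \<noteq> a1 \<and> a2 < b \<longrightarrow> \<not> D4_tuple 4 {a2, b, c, d}))"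

end

theory Submission
  imports Defs
begin

text \<open>If \<open>r\<^sup>2 = ab + 4\<close>, \<open>s\<^sup>2 = ac + 4\<close>, \<open>t\<^sup>2 = bc + 4\<close>, then the regular extension
  \<open>d = a + b + c + (abc + rst)/2\<close> always extends \<open>{a, b, c}\<close> to a D(4)-quadruple, so under
  Conjecture 1 every quadruple \<open>{a, b, c, d}\<close> with \<open>a < b < c < d\<close> satisfies this formula.
  For fixed \<open>b, c\<close> the right-hand side is strictly increasing in \<open>a\<close>, hence \<open>d\<close> determines
  \<open>a\<close>.\<close>

lemma D4_tuple_insert:
  assumes "finite S" "d \<notin> S"
  shows "D4_tuple (Suc m) (insert d S) \<longleftrightarrow>
           D4_tuple m S \<and> 0 < d \<and> (\<forall>x\<in>S. is_square (x * d + 4))"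
  using assms unfolding D4_tuple_def by (auto simp: mult.commute)

lemma D4_triple_iff:
  assumes "a < b" "b < c"
  shows "D4_tuple 3 {a, b, c} \<longleftrightarrow>
           0 < a \<and> is_square (a * b + 4) \<and> is_square (a * c + 4) \<and> is_square (b * c + 4)"
  using assms unfolding D4_tuple_def by (auto simp: mult.commute)

lemma is_square_if_four_mult_eq_square:
  fixes n X :: nat
  assumes "4 * n = X ^ 2"
  shows "is_square n"
proof -
  have "even (X ^ 2)" unfolding assms[symmetric] by simp
  then obtain y where X: "X = 2 * y" by auto
  have "n = y ^ 2" using assms unfolding X by (simp add: power_mult_distrib)
  then show ?thesis unfolding is_square_def by blast
qed

lemma D4_triple_even_prod_add_prod_roots:
  fixes a b c r s t :: nat
  assumes "r ^ 2 = a * b + 4" "s ^ 2 = a * c + 4" "t ^ 2 = b * c + 4"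
  shows "even (a * b * c + r * s * t)"
proof -
  have "even r \<longleftrightarrow> even a \<or> even b" using arg_cong[OF assms(1), of even] by simp
  moreover have "even s \<longleftrightarrow> even a \<or> even c" using arg_cong[OF assms(2), of even] by simp
  moreover have "even t \<longleftrightarrow> even b \<or> even c" using arg_cong[OF assms(3), of even] by simp
  ultimately show ?thesis by auto
qed

lemma regular_extension_square_identity:
  fixes a b c r s t :: nat
  assumes r: "r ^ 2 = a * b + 4" and s: "s ^ 2 = a * c + 4" and t: "t ^ 2 = b * c + 4"
  shows "2 * a * (2 * (a + b + c) + a * b * c + r * s * t) + 16 = (a * t + r * s) ^ 2"
proof -
  have "(a * t + r * s) ^ 2 = a ^ 2 * t ^ 2 + 2 * a * r * s * t + r ^ 2 * s ^ 2"
    by (simp add: power2_eq_square algebra_simps)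
  then show ?thesis unfolding r s t by (simp add: power2_eq_square algebra_simps)
qed

lemma D4_regular_extension:
  fixes a b c r s t :: nat
  assumes r: "r ^ 2 = a * b + 4" and s: "s ^ 2 = a * c + 4" and t: "t ^ 2 = b * c + 4"
  obtains d where "2 * d = 2 * (a + b + c) + a * b * c + r * s * t"
    and "is_square (a * d + 4)" "is_square (b * d + 4)" "is_square (c * d + 4)"
proof -
  obtain k where k: "a * b * c + r * s * t = 2 * k"
    using D4_triple_even_prod_add_prod_roots[OF r s t] by (rule evenE)
  define d where "d = a + b + c + k"
  have d: "2 * d = 2 * (a + b + c) + a * b * c + r * s * t"
    unfolding d_def using k by simp
  have four_times: "4 * (x * d + 4) = 2 * x * (2 * d) + 16" for x by simp
  have "4 * (a * d + 4) = (a * t + r * s) ^ 2"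
    using regular_extension_square_identity[OF r s t] unfolding four_times d .
  \<comment> \<open>the identities for \<open>b\<close> and \<open>c\<close> are the one for \<open>a\<close> with the roles permuted\<close>
  moreover have "4 * (b * d + 4) = (b * s + r * t) ^ 2"
    using regular_extension_square_identity[of r b a t c s] r s t
    unfolding four_times d by (simp add: ac_simps)
  moreover have "4 * (c * d + 4) = (c * r + s * t) ^ 2"
    using regular_extension_square_identity[of s c a t b r] r s t
    unfolding four_times d by (simp add: ac_simps)
  ultimately show ?thesis
    using that[OF d] is_square_if_four_mult_eq_square by blast
qed

lemma D4_quadruple_eq_regular_extension:
  assumes "conjecture1" and quad: "D4_tuple 4 {a, b, c, d}"
    and "a < b" "b < c" "c < d"
  shows "\<exists>r s t. r ^ 2 = a * b + 4 \<and> s ^ 2 = a * c + 4 \<and> t ^ 2 = b * c + 4 \<and>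
           2 * d = 2 * (a + b + c) + a * b * c + r * s * t"
proof -
  have extension_iff: "D4_tuple 4 {a, b, c, x} \<longleftrightarrow>
      D4_tuple 3 {a, b, c} \<and> 0 < x \<and> (\<forall>y\<in>{a, b, c}. is_square (y * x + 4))"
    if "c < x" for x
  proof -
    have "{a, b, c, x} = insert x {a, b, c}" by auto
    moreover have "x \<notin> {a, b, c}" using \<open>a < b\<close> \<open>b < c\<close> \<open>c < x\<close> by auto
    ultimately show ?thesis using D4_tuple_insert[of "{a, b, c}" x 3] by simp
  qed
  have triple: "D4_tuple 3 {a, b, c}" using quad extension_iff \<open>c < d\<close> by blast
  then have "0 < a" "is_square (a * b + 4)" "is_square (a * c + 4)" "is_square (b * c + 4)"
    using D4_triple_iff \<open>a < b\<close> \<open>b < c\<close> by blast+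
  then obtain r s t where r: "r ^ 2 = a * b + 4" and s: "s ^ 2 = a * c + 4"
    and t: "t ^ 2 = b * c + 4"
    unfolding is_square_def by metis
  obtain d' where d': "2 * d' = 2 * (a + b + c) + a * b * c + r * s * t"
    and sq: "is_square (a * d' + 4)" "is_square (b * d' + 4)" "is_square (c * d' + 4)"
    using D4_regular_extension[OF r s t] .
  have "c < d'" using d' \<open>0 < a\<close> by simp
  then have "D4_tuple 4 {a, b, c, d'}" using extension_iff triple sq by simp
  moreover have "Max {a, b, c} = c" using \<open>a < b\<close> \<open>b < c\<close> by (simp add: max_def)
  ultimately have "d = d'"
    using \<open>conjecture1\<close> triple quad \<open>c < d\<close> \<open>c < d'\<close>
    unfolding conjecture1_def by metis
  then show ?thesis using r s t d' by blast
qed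

lemma regular_extension_strict_mono:
  fixes a a' b c r s r' s' t :: nat
  assumes "a < a'"
    and r: "r ^ 2 = a * b + 4" and s: "s ^ 2 = a * c + 4"
    and r': "r' ^ 2 = a' * b + 4" and s': "s' ^ 2 = a' * c + 4"
  shows "2 * (a + b + c) + a * b * c + r * s * t < 2 * (a' + b + c) + a' * b * c + r' * s' * t"
proof -
  have "r ^ 2 \<le> r' ^ 2" "s ^ 2 \<le> s' ^ 2" unfolding r r' s s' using \<open>a < a'\<close> by simp_all
  then have "r \<le> r'" "s \<le> s'" using power2_le_imp_le by blast+
  then have "r * s * t \<le> r' * s' * t" by (simp add: mult_mono)
  moreover have "a * b * c \<le> a' * b * c" using \<open>a < a'\<close> by simp
  ultimately show ?thesis using \<open>a < a'\<close> by (simp add: add_less_le_mono add_le_mono)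
qed

theorem mainTheorem5:
  assumes "conjecture1"
  shows "conjecture2"
  unfolding conjecture2_def
proof (intro allI impI notI, elim conjE)
  fix a1 b c d a2
  assume quad1: "D4_tuple 4 {a1, b, c, d}" and "a1 < b" "b < c" "c < d"
    and "0 < a2" "a2 \<noteq> a1" "a2 < b" and quad2: "D4_tuple 4 {a2, b, c, d}"
  obtain r1 s1 t where r1: "r1 ^ 2 = a1 * b + 4" and s1: "s1 ^ 2 = a1 * c + 4"
    and t: "t ^ 2 = b * c + 4" and d1: "2 * d = 2 * (a1 + b + c) + a1 * b * c + r1 * s1 * t"
    using D4_quadruple_eq_regular_extension[OF assms quad1 \<open>a1 < b\<close> \<open>b < c\<close> \<open>c < d\<close>]
    by blast
  obtain r2 s2 t' where r2: "r2 ^ 2 = a2 * b + 4" and s2: "s2 ^ 2 = a2 * c + 4"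
    and t': "t' ^ 2 = b * c + 4" and d2: "2 * d = 2 * (a2 + b + c) + a2 * b * c + r2 * s2 * t'"
    using D4_quadruple_eq_regular_extension[OF assms quad2 \<open>a2 < b\<close> \<open>b < c\<close> \<open>c < d\<close>]
    by blast
  have "t' = t" using t t' by (metis power2_eq_imp_eq zero_le)
  show False
  proof (cases "a1 < a2")
    case True
    show False
      using regular_extension_strict_mono[OF True r1 s1 r2 s2, of t] d1 d2 \<open>t' = t\<close> by simp
  next
    case False
    then have "a2 < a1" using \<open>a2 \<noteq> a1\<close> by simp
    show False
      using regular_extension_strict_mono[OF \<open>a2 < a1\<close> r2 s2 r1 s1, of t] d1 d2 \<open>t' = t\<close>
      by simp
  qed
qed

end
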